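(* Let $\mathcal{M}^{(N)}$ be a symmetric weakly coupled MDP (WCMDP) with discount factor $\gamma\in[0,1)$. Let $\Pi^*_{\mathbf{1}/N,\mathrm{PI}}$ denote the set of stationary Markov policies that are permutation invariant and that maximize the utilitarian objective $\mathrm{GGF}_{\mathbf{1}/N}[\mathbf{V}_0^{\pi}]=\frac1N\sum_{n=1}^N V^{\pi}_{0,n}$ over all stationary Markov policies $\pi$. Then $\Pi^*_{\mathbf{1}/N,\mathrm{PI}}$ is non-empty, and every $\pi^*\in\Pi^*_{\mathbf{1}/N,\mathrm{PI}}$ satisfies \[ \mathrm{GGF}_{\mathbf{w}}\big[\mathbf{V}_0^{\pi^*}\big]=\max_{\pi}\mathrm{GGF}_{\mathbf{w}}\big[\mathbf{V}_0^{\pi}\big] \] for every weight vector $\mathbf{w}=(w_1,\dots,w_N)$ in the probability simplex with $w_1\ge w_2\ge\cdots\ge w_N$, where the maximum is over all stationary Markov policies.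
   Context: A WCMDP consists of $N$ sub-MDPs $n\in[N]$, each with finite state set $\mathcal{S}_n$, finite action set $\mathcal{A}_n$, transition kernel $p_n(s'|s,a)$ and reward $r_n(s,a)\in\mathbb{R}$. The joint state space is $\mathcal{S}^{(N)}=\prod_n\mathcal{S}_n$; the joint feasible action set is $\mathcal{A}^{(N)}=\{(a_1,\dots,a_N): a_n\in\mathcal{A}_n,\ \sum_{n=1}^N d_{k,n}(a_n)\le b_k\ \forall k\in[K]\}$ with $d_{k,n}\ge 0$, $b_k\ge0$, and an idle action consuming no resource so this set is non-empty. Joint transitions are $P^{(N)}(\mathbf{s}'|\mathbf{s},\mathbf{a})=\prod_{n}p_n(s'_n|s_n,a_n)$ and the vector reward is $\mathbf{r}(\mathbf{s},\mathbf{a})=(r_1(s_1,a_1),\dots,r_N(s_N,a_N))$. The initial joint state is drawn from a distribution $\boldsymbol{\mu}$ on $\mathcal{S}^{(N)}$. A stationary Markov policy $\pi$ gives probabilities $\pi(\mathbf{s},\mathbf{a})$ over $\mathbf{a}\in\mathcal{A}^{(N)}$ for each $\mathbf{s}$. The value vector is $\mathbf{V}_0^{\pi}=\mathbb{E}_{\pi}\big[\sum_{t\ge0}\gamma^t\mathbf{r}(\mathbf{s}_t,\mathbf{a}_t)\,\big|\,\mathbf{s}_0\sim\boldsymbol{\mu}\big]\in\mathbb{R}^N$, with components $V^{\pi}_{0,n}$. Permutations: for a permutation $\sigma$ of $[N]$, the permutation operator $Q$ acts on any $N$-tuple $\mathbf{v}$ by $(Q\mathbf{v})_n=v_{\sigma(n)}$;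 it acts in the same way on joint states and joint actions. $\mathcal{G}^N$ denotes the set of all $N!$ such operators. The WCMDP is symmetric if: (1) all sub-MDPs are identical ($\mathcal{S}_n=\mathcal{S}$, $\mathcal{A}_n=\mathcal{A}$, $p_n=p$, $r_n=r$ for all $n$); (2) resource consumption is symmetric ($d_{k,n}=d_k$ for all $n$); (3) $\boldsymbol{\mu}(\mathbf{s}_0)=\boldsymbol{\mu}(Q\mathbf{s}_0)$ for all $\mathbf{s}_0$ and all $Q\in\mathcal{G}^N$. A stationary Markov policy $\pi$ is permutation invariant if $\pi(\mathbf{s},\mathbf{a})=\pi(Q\mathbf{s},Q\mathbf{a})$ for all $Q\in\mathcal{G}^N$, $\mathbf{s}$, $\mathbf{a}$. Generalized Gini function: for $\mathbf{v}\in\mathbb{R}^N$ and weights $\mathbf{w}$ in the probability simplex with $w_1\ge\dots\ge w_N$, $\mathrm{GGF}_{\mathbf{w}}[\mathbf{v}]=\min_{\sigma}\sum_{n=1}^N w_n v_{\sigma(n)}$, the minimum over all permutations $\sigma$ of $[N]$. The utilitarian case is $\mathbf{w}=\mathbf{1}/N$, giving $\mathrm{GGF}_{\mathbf{1}/N}[\mathbf{v}]=\frac1N\sum_n v_n$. *)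

theory Defs
  imports "HOL-Analysis.Analysis" "HOL-Combinatorics.Permutations"
begin

text \<open>Symmetric weakly coupled MDP with N identical sub-MDPs (state type 's, action type 'a,
  both finite). Joint states / joint actions are lists of length N, positions 0..N-1.\<close>

definition joint_states :: "nat \<Rightarrow> 's list set" where
  "joint_states N = {xs. length xs = N}"

text \<open>Feasible joint actions: K resource constraints, consumption d k a, budgets b k.\<close>
definition joint_actions :: "nat \<Rightarrow> nat \<Rightarrow> (nat \<Rightarrow> 'a \<Rightarrow> real) \<Rightarrow> (nat \<Rightarrow> real) \<Rightarrow> 'a list set" where
  "joint_actions N K d b = {as. length as = N \<and> (\<forall>k<K. (\<Sum>n<N. d k (as ! n)) \<le> b k)}"

definition joint_trans :: "nat \<Rightarrow> ('s \<Rightarrow> 'a \<Rightarrow> 's \<Rightarrow> real) \<Rightarrow> 's list \<Rightarrow> 'a list \<Rightarrow> 's list \<Rightarrow> real" where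
  "joint_trans N p xs as ys = (\<Prod>n<N. p (xs ! n) (as ! n) (ys ! n))"

definition stationary_policy :: "nat \<Rightarrow> nat \<Rightarrow> (nat \<Rightarrow> 'a \<Rightarrow> real) \<Rightarrow> (nat \<Rightarrow> real)
    \<Rightarrow> ('s list \<Rightarrow> 'a list \<Rightarrow> real) \<Rightarrow> bool" where
  "stationary_policy N K d b \<pi> \<longleftrightarrow>
     (\<forall>xs \<in> joint_states N.
        (\<forall>as. 0 \<le> \<pi> xs as) \<and>
        (\<forall>as. as \<notin> joint_actions N K d b \<longrightarrow> \<pi> xs as = 0) \<and>
        (\<Sum>as \<in> joint_actions N K d b. \<pi> xs as) = 1)"

fun state_dist :: "nat \<Rightarrow> nat \<Rightarrow> (nat \<Rightarrow> 'a \<Rightarrow> real) \<Rightarrow> (nat \<Rightarrow> real) \<Rightarrow> ('s \<Rightarrow> 'a \<Rightarrow> 's \<Rightarrow> real)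
    \<Rightarrow> ('s list \<Rightarrow> real) \<Rightarrow> ('s list \<Rightarrow> 'a list \<Rightarrow> real) \<Rightarrow> nat \<Rightarrow> 's list \<Rightarrow> real" where
  "state_dist N K d b p mu \<pi> 0 ys = mu ys"
| "state_dist N K d b p mu \<pi> (Suc t) ys =
     (\<Sum>xs \<in> joint_states N. \<Sum>as \<in> joint_actions N K d b.
        state_dist N K d b p mu \<pi> t xs * \<pi> xs as * joint_trans N p xs as ys)"

text \<open>Component n of the value vector V_0^pi = E[sum_t gamma^t r(s_t,a_t)], written as
  the discounted sum of expected rewards of sub-MDP n at each time t.\<close>
definition value_vec :: "nat \<Rightarrow> nat \<Rightarrow> (nat \<Rightarrow> 'a \<Rightarrow> real) \<Rightarrow> (nat \<Rightarrow> real) \<Rightarrow> ('s \<Rightarrow> 'a \<Rightarrow> 's \<Rightarrow> real)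
    \<Rightarrow> ('s \<Rightarrow> 'a \<Rightarrow> real) \<Rightarrow> real \<Rightarrow> ('s list \<Rightarrow> real) \<Rightarrow> ('s list \<Rightarrow> 'a list \<Rightarrow> real) \<Rightarrow> nat \<Rightarrow> real" where
  "value_vec N K d b p r \<gamma> mu \<pi> n =
     (\<Sum>t. \<gamma> ^ t * (\<Sum>xs \<in> joint_states N. \<Sum>as \<in> joint_actions N K d b.
        state_dist N K d b p mu \<pi> t xs * \<pi> xs as * r (xs ! n) (as ! n)))"

definition perm_list :: "(nat \<Rightarrow> nat) \<Rightarrow> 'x list \<Rightarrow> 'x list" where
  "perm_list \<sigma> v = map (\<lambda>n. v ! \<sigma> n) [0..<length v]"

definition perm_invariant :: "nat \<Rightarrow> ('s list \<Rightarrow> 'a list \<Rightarrow> real) \<Rightarrow> bool" where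
  "perm_invariant N \<pi> \<longleftrightarrow>
     (\<forall>\<sigma>. \<sigma> permutes {..<N} \<longrightarrow>
        (\<forall>xs as. length xs = N \<longrightarrow> length as = N \<longrightarrow> \<pi> xs as = \<pi> (perm_list \<sigma> xs) (perm_list \<sigma> as)))"

definition GGF :: "nat \<Rightarrow> (nat \<Rightarrow> real) \<Rightarrow> (nat \<Rightarrow> real) \<Rightarrow> real" where
  "GGF N w v = Min {(\<Sum>n<N. w n * v (\<sigma> n)) | \<sigma>. \<sigma> permutes {..<N}}"

definition gini_weights :: "nat \<Rightarrow> (nat \<Rightarrow> real) \<Rightarrow> bool" where
  "gini_weights N w \<longleftrightarrow> (\<forall>n<N. 0 \<le> w n) \<and> (\<Sum>n<N. w n) = 1 \<and>
     (\<forall>i j. i \<le> j \<longrightarrow> j < N \<longrightarrow> w j \<le> w i)"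

definition opt_util_PI :: "nat \<Rightarrow> nat \<Rightarrow> (nat \<Rightarrow> 'a \<Rightarrow> real) \<Rightarrow> (nat \<Rightarrow> real) \<Rightarrow> ('s \<Rightarrow> 'a \<Rightarrow> 's \<Rightarrow> real)
    \<Rightarrow> ('s \<Rightarrow> 'a \<Rightarrow> real) \<Rightarrow> real \<Rightarrow> ('s list \<Rightarrow> real) \<Rightarrow> ('s list \<Rightarrow> 'a list \<Rightarrow> real) set" where
  "opt_util_PI N K d b p r \<gamma> mu =
     {\<pi>. stationary_policy N K d b \<pi> \<and> perm_invariant N \<pi> \<and>
          (\<forall>\<pi>'. stationary_policy N K d b \<pi>' \<longrightarrow>
             GGF N (\<lambda>_. 1 / real N) (value_vec N K d b p r \<gamma> mu \<pi>')
               \<le> GGF N (\<lambda>_. 1 / real N) (value_vec N K d b p r \<gamma> mu \<pi>))}"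

end

theory Submission
  imports Defs "HOL-Number_Theory.Cong"
begin

text \<open>A stationary policy is represented by its discounted state-action occupation measure. The
  utilitarian value is a linear function of it, and the feasible occupation measures (solutions of
  the discounted balance equations) form a compact set, so a maximiser exists. By the symmetry of
  the model, permuting the sub-MDPs maps feasible measures to feasible measures with the same
  utilitarian value; averaging a maximiser over all permutations yields a symmetric maximiser, whose
  induced policy is permutation invariant. Such a policy gives every sub-MDP the same value, so its
  GGF equals the mean of its values for every weight vector. Conversely, for any policy the GGF is at
  most the mean of its values (average over the cyclic shifts), and the mean is at most the optimal
  utilitarian value.\<close>

lemma length_perm_list [simp]: "length (perm_list \<sigma> v) = length v"
  by (simp add: perm_list_def)

lemma nth_perm_list [simp]: "n < length v \<Longrightarrow> perm_list \<sigma> v ! n = v ! \<sigma> n"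
  by (simp add: perm_list_def)

lemma perm_list_id [simp]: "perm_list id v = v"
  by (simp add: perm_list_def map_nth)

lemma perm_list_perm_list:
  assumes "\<sigma> permutes {..<length v}"
  shows "perm_list \<sigma> (perm_list \<tau> v) = perm_list (\<tau> \<circ> \<sigma>) v"
proof (rule nth_equalityI)
  fix n assume "n < length (perm_list \<sigma> (perm_list \<tau> v))"
  then have "n < length v" "\<sigma> n < length v"
    using permutes_in_image[OF assms] by auto
  then show "perm_list \<sigma> (perm_list \<tau> v) ! n = perm_list (\<tau> \<circ> \<sigma>) v ! n"
    by simp
qed simp

lemma perm_list_inv_cancel:
  assumes "\<sigma> permutes {..<length v}"
  shows "perm_list (inv \<sigma>) (perm_list \<sigma> v) = v" "perm_list \<sigma> (perm_list (inv \<sigma>) v) = v"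
  using perm_list_perm_list[OF permutes_inv[OF assms], of \<sigma>] perm_list_perm_list[OF assms, of "inv \<sigma>"]
    permutes_inv_o[OF assms] by simp_all

lemma bij_betw_perm_list:
  assumes "\<sigma> permutes {..<N}" and "\<And>v. v \<in> X \<Longrightarrow> length v = N"
    and "\<And>v. length v = N \<Longrightarrow> perm_list \<sigma> v \<in> X \<longleftrightarrow> v \<in> X"
  shows "bij_betw (perm_list \<sigma>) X X"
proof (rule bij_betw_byWitness[where f'="perm_list (inv \<sigma>)"])
  have cancel: "perm_list (inv \<sigma>) (perm_list \<sigma> v) = v" "perm_list \<sigma> (perm_list (inv \<sigma>) v) = v"
    if "length v = N" for v
    using perm_list_inv_cancel[of \<sigma> v] assms(1) that by simp_all
  then show "\<forall>v\<in>X. perm_list (inv \<sigma>) (perm_list \<sigma> v) = v" "\<forall>v\<in>X. perm_list \<sigma> (perm_list (inv \<sigma>) v) = v"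
    using assms(2) by auto
  show "perm_list \<sigma> ` X \<subseteq> X"
    using assms(2,3) by auto
  show "perm_list (inv \<sigma>) ` X \<subseteq> X"
    using assms(2,3) cancel(2) by (metis image_subsetI length_perm_list)
qed

lemma sum_lists_length_prod:
  fixes f :: "nat \<Rightarrow> 's::finite \<Rightarrow> 'b::comm_semiring_1"
  shows "(\<Sum>ys | length ys = n. \<Prod>i<n. f i (ys ! i)) = (\<Prod>i<n. \<Sum>s\<in>UNIV. f i s)"
proof (induction n arbitrary: f)
  case 0
  then show ?case by simp
next
  case (Suc n)
  let ?L = "{ys :: 's list. length ys = n}"
  have lists_Suc: "{ys. length ys = Suc n} = (\<lambda>(y, ys). y # ys) ` (UNIV \<times> ?L)"
    by (auto simp: image_iff length_Suc_conv)
  have "inj_on (\<lambda>(y, ys). y # ys) (UNIV \<times> ?L)"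
    by (auto simp: inj_on_def)
  then have "(\<Sum>ys | length ys = Suc n. \<Prod>i<Suc n. f i (ys ! i))
      = (\<Sum>(y, ys)\<in>UNIV \<times> ?L. f 0 y * (\<Prod>i<n. f (Suc i) (ys ! i)))"
    unfolding lists_Suc
    by (subst sum.reindex) (simp_all only: prod.lessThan_Suc_shift, simp add: case_prod_beta)
  also have "\<dots> = (\<Sum>y\<in>UNIV. f 0 y) * (\<Prod>i<n. \<Sum>s\<in>UNIV. f (Suc i) s)"
    by (simp add: sum.cartesian_product[symmetric] sum_distrib_left[symmetric] sum_distrib_right
        Suc.IH[of "\<lambda>i. f (Suc i)"])
  also have "\<dots> = (\<Prod>i<Suc n. \<Sum>s\<in>UNIV. f i s)"
    by (simp only: prod.lessThan_Suc_shift)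
  finally show ?case .
qed

text \<open>Since \<open>M\<close> is stochastic, the map \<open>e \<mapsto> \<gamma> e M\<close> shrinks the \<open>\<ell>\<^sub>1\<close>-norm by the factor \<open>\<gamma> < 1\<close>.\<close>
lemma discounted_fixpoint_eq_0:
  fixes M :: "'x \<Rightarrow> 'x \<Rightarrow> real"
  assumes "finite X"
    and M_nonneg: "\<And>x y. x \<in> X \<Longrightarrow> y \<in> X \<Longrightarrow> 0 \<le> M x y"
    and M_stochastic: "\<And>x. x \<in> X \<Longrightarrow> (\<Sum>y\<in>X. M x y) = 1"
    and "0 \<le> \<gamma>" "\<gamma> < 1"
    and fixpoint: "\<And>y. y \<in> X \<Longrightarrow> e y = \<gamma> * (\<Sum>x\<in>X. e x * M x y)"
    and "y \<in> X"
  shows "e y = 0"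
proof -
  have "(\<Sum>y\<in>X. \<bar>e y\<bar>) \<le> (\<Sum>y\<in>X. \<gamma> * (\<Sum>x\<in>X. \<bar>e x\<bar> * M x y))"
  proof (rule sum_mono)
    fix y assume "y \<in> X"
    have "\<bar>e y\<bar> = \<gamma> * \<bar>\<Sum>x\<in>X. e x * M x y\<bar>"
      using fixpoint[OF \<open>y \<in> X\<close>] \<open>0 \<le> \<gamma>\<close> by (simp add: abs_mult)
    also have "\<dots> \<le> \<gamma> * (\<Sum>x\<in>X. \<bar>e x\<bar> * M x y)"
      using \<open>0 \<le> \<gamma>\<close> \<open>y \<in> X\<close> M_nonneg
      by (intro mult_left_mono order_trans[OF sum_abs]) (auto simp: abs_mult intro!: sum_mono)
    finally show "\<bar>e y\<bar> \<le> \<gamma> * (\<Sum>x\<in>X. \<bar>e x\<bar> * M x y)" .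
  qed
  also have "\<dots> = \<gamma> * (\<Sum>x\<in>X. \<bar>e x\<bar> * (\<Sum>y\<in>X. M x y))"
    by (simp add: sum_distrib_left[symmetric] sum.swap[of _ X X])
  also have "\<dots> = \<gamma> * (\<Sum>x\<in>X. \<bar>e x\<bar>)"
    by (simp add: M_stochastic)
  finally have "(1 - \<gamma>) * (\<Sum>y\<in>X. \<bar>e y\<bar>) \<le> 0"
    by (simp add: algebra_simps)
  then have "(\<Sum>y\<in>X. \<bar>e y\<bar>) \<le> 0"
    using \<open>\<gamma> < 1\<close> by (simp add: mult_le_0_iff)
  then have "(\<Sum>y\<in>X. \<bar>e y\<bar>) = 0"
    using sum_abs_ge_zero[of e X] by linarith
  then show ?thesis
    using sum_nonneg_eq_0_iff[OF \<open>finite X\<close>, of "\<lambda>y. \<bar>e y\<bar>"] \<open>y \<in> X\<close> by simp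
qed

section \<open>The generalized Gini function\<close>

lemma GGF_le_permuted: "\<sigma> permutes {..<N} \<Longrightarrow> GGF N w v \<le> (\<Sum>n<N. w n * v (\<sigma> n))"
  unfolding GGF_def
  by (rule Min_le) (auto simp: setcompr_eq_image finite_permutations)

lemma GGF_eqI:
  assumes "\<And>\<sigma>. \<sigma> permutes {..<N} \<Longrightarrow> (\<Sum>n<N. w n * v (\<sigma> n)) = c"
  shows "GGF N w v = c"
proof -
  have "{(\<Sum>n<N. w n * v (\<sigma> n)) | \<sigma>. \<sigma> permutes {..<N}} = {c}"
    using assms permutes_id by blast
  then show ?thesis
    unfolding GGF_def by simp
qed

lemma GGF_uniform: "GGF N (\<lambda>_. 1 / real N) v = (\<Sum>n<N. v n) / real N"
proof (rule GGF_eqI)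
  fix \<sigma> assume "\<sigma> permutes {..<N}"
  then show "(\<Sum>n<N. 1 / real N * v (\<sigma> n)) = (\<Sum>n<N. v n) / real N"
    using sum.permute[of \<sigma> "{..<N}" v] by (simp add: sum_divide_distrib comp_def)
qed

lemma GGF_const:
  assumes "\<And>n. n < N \<Longrightarrow> v n = c" and "(\<Sum>n<N. w n) = 1"
  shows "GGF N w v = c"
proof (rule GGF_eqI)
  fix \<sigma> assume "\<sigma> permutes {..<N}"
  then have "(\<Sum>n<N. w n * v (\<sigma> n)) = (\<Sum>n<N. w n) * c"
    using permutes_in_image assms(1) by (force simp: sum_distrib_right intro: sum.cong)
  then show "(\<Sum>n<N. w n * v (\<sigma> n)) = c"
    using assms(2) by simp
qed

definition cyclic_shift :: "nat \<Rightarrow> nat \<Rightarrow> nat \<Rightarrow> nat" where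
  "cyclic_shift N k i = (if i < N then (i + k) mod N else i)"

lemma bij_betw_cyclic_shift: "bij_betw (cyclic_shift N k) {..<N} {..<N}"
proof -
  have "inj_on (cyclic_shift N k) {..<N}"
  proof (rule inj_onI)
    fix i j assume "i \<in> {..<N}" "j \<in> {..<N}" "cyclic_shift N k i = cyclic_shift N k j"
    then have "[i + k = j + k] (mod N)" "i < N" "j < N"
      by (simp_all add: cyclic_shift_def cong_def)
    then show "i = j"
      by (simp add: cong_add_rcancel_nat cong_less_modulus_unique_nat)
  qed
  moreover have "cyclic_shift N k ` {..<N} \<subseteq> {..<N}"
    by (auto simp: cyclic_shift_def)
  ultimately show ?thesis
    by (simp add: bij_betw_def endo_inj_surj)
qed

lemma cyclic_shift_permutes: "cyclic_shift N k permutes {..<N}"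
  by (rule bij_imp_permutes[OF bij_betw_cyclic_shift]) (simp add: cyclic_shift_def)

lemma sum_cyclic_shifts:
  assumes "n < N"
  shows "(\<Sum>k<N. v (cyclic_shift N k n)) = (\<Sum>m<N. v m)"
proof -
  have "(\<Sum>k<N. v (cyclic_shift N k n)) = (\<Sum>k<N. v (cyclic_shift N n k))"
    using assms by (intro sum.cong) (auto simp: cyclic_shift_def add.commute)
  also have "\<dots> = (\<Sum>m<N. v m)"
    by (rule sum.reindex_bij_betw[OF bij_betw_cyclic_shift])
  finally show ?thesis .
qed

text \<open>Only \<open>\<Sum>n. w n = 1\<close> is needed here, not the monotonicity of the Gini weights: averaging the
  \<open>N\<close> cyclic shifts of the argument already gives the mean.\<close>
lemma GGF_le_mean:
  assumes "(\<Sum>n<N. w n) = 1" and "0 < N"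
  shows "GGF N w v \<le> (\<Sum>n<N. v n) / real N"
proof -
  have "real N * GGF N w v = (\<Sum>k<N. GGF N w v)"
    by simp
  also have "\<dots> \<le> (\<Sum>k<N. \<Sum>n<N. w n * v (cyclic_shift N k n))"
    by (intro sum_mono GGF_le_permuted cyclic_shift_permutes)
  also have "\<dots> = (\<Sum>n<N. w n * (\<Sum>k<N. v (cyclic_shift N k n)))"
    by (subst sum.swap) (simp add: sum_distrib_left)
  also have "\<dots> = (\<Sum>n<N. w n) * (\<Sum>m<N. v m)"
    by (simp add: sum_cyclic_shifts sum_distrib_right)
  finally show ?thesis
    using assms by (simp add: field_simps)
qed

section \<open>Discounted state visits\<close>

locale symmetric_wcmdp =
  fixes N K :: nat
    and p :: "'s::finite \<Rightarrow> 'a::finite \<Rightarrow> 's \<Rightarrow> real"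
    and r :: "'s \<Rightarrow> 'a \<Rightarrow> real"
    and d :: "nat \<Rightarrow> 'a \<Rightarrow> real" and b :: "nat \<Rightarrow> real"
    and \<gamma> :: real and mu :: "'s list \<Rightarrow> real"
  assumes p_nonneg: "\<And>s a s'. 0 \<le> p s a s'"
    and p_sum: "\<And>s a. (\<Sum>s'\<in>UNIV. p s a s') = 1"
    and gamma_nonneg: "0 \<le> \<gamma>" and gamma_less_1: "\<gamma> < 1"
    and mu_nonneg: "\<And>xs. xs \<in> joint_states N \<Longrightarrow> 0 \<le> mu xs"
    and mu_sum: "(\<Sum>xs \<in> joint_states N. mu xs) = 1"
    and mu_sym: "\<And>\<sigma> xs. \<sigma> permutes {..<N} \<Longrightarrow> xs \<in> joint_states N \<Longrightarrow> mu xs = mu (perm_list \<sigma> xs)"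
begin

abbreviation "S \<equiv> joint_states N :: 's list set"
abbreviation "A \<equiv> joint_actions N K d b :: 'a list set"
abbreviation "T \<equiv> joint_trans N p"
abbreviation "sd \<equiv> state_dist N K d b p mu"
abbreviation "SP \<equiv> stationary_policy N K d b"
abbreviation "V \<equiv> value_vec N K d b p r \<gamma> mu"

lemma finite_states [simp]: "finite S"
  unfolding joint_states_def using finite_lists_length_eq[of "UNIV :: 's set" N] by simp

lemma finite_actions [simp]: "finite A"
  by (rule finite_subset[of _ "{as. length as = N}"])
     (use finite_lists_length_eq[of "UNIV :: 'a set" N] in \<open>auto simp: joint_actions_def\<close>)

lemma length_state: "xs \<in> S \<Longrightarrow> length xs = N"
  by (simp add: joint_states_def)

lemma length_action: "as \<in> A \<Longrightarrow> length as = N"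
  by (simp add: joint_actions_def)

lemma trans_nonneg: "0 \<le> T xs as ys"
  unfolding joint_trans_def by (simp add: p_nonneg prod_nonneg)

lemma sum_trans: "(\<Sum>ys\<in>S. T xs as ys) = 1"
  unfolding joint_trans_def joint_states_def
  using sum_lists_length_prod[of "\<lambda>i s. p (xs ! i) (as ! i) s" N] by (simp add: p_sum)

lemma policy_nonneg: "SP \<pi> \<Longrightarrow> xs \<in> S \<Longrightarrow> 0 \<le> \<pi> xs as"
  by (simp add: stationary_policy_def)

lemma sum_policy: "SP \<pi> \<Longrightarrow> xs \<in> S \<Longrightarrow> (\<Sum>as\<in>A. \<pi> xs as) = 1"
  by (simp add: stationary_policy_def)

lemma policy_le_1:
  assumes "SP \<pi>" "xs \<in> S"
  shows "\<pi> xs as \<le> 1"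
proof (cases "as \<in> A")
  case True
  then have "\<pi> xs as \<le> (\<Sum>as\<in>A. \<pi> xs as)"
    using assms by (intro member_le_sum) (auto simp: policy_nonneg)
  then show ?thesis
    using assms by (simp add: sum_policy)
qed (use assms in \<open>simp add: stationary_policy_def\<close>)

definition kernel :: "('s list \<Rightarrow> 'a list \<Rightarrow> real) \<Rightarrow> 's list \<Rightarrow> 's list \<Rightarrow> real" where
  "kernel \<pi> xs ys = (\<Sum>as\<in>A. \<pi> xs as * T xs as ys)"

lemma kernel_nonneg: "SP \<pi> \<Longrightarrow> xs \<in> S \<Longrightarrow> 0 \<le> kernel \<pi> xs ys"
  unfolding kernel_def by (simp add: sum_nonneg policy_nonneg trans_nonneg)

lemma sum_kernel: "SP \<pi> \<Longrightarrow> xs \<in> S \<Longrightarrow> (\<Sum>ys\<in>S. kernel \<pi> xs ys) = 1"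
  unfolding kernel_def
  by (subst sum.swap) (simp add: sum_distrib_left[symmetric] sum_trans sum_policy)

lemma state_dist_Suc: "sd \<pi> (Suc t) ys = (\<Sum>xs\<in>S. sd \<pi> t xs * kernel \<pi> xs ys)"
  by (simp add: kernel_def sum_distrib_left mult.assoc)

lemma state_dist_nonneg: "SP \<pi> \<Longrightarrow> xs \<in> S \<Longrightarrow> 0 \<le> sd \<pi> t xs"
proof (induction t arbitrary: xs)
  case 0
  then show ?case by (simp add: mu_nonneg)
next
  case (Suc t)
  then show ?case
    unfolding state_dist_Suc by (intro sum_nonneg mult_nonneg_nonneg kernel_nonneg) auto
qed

lemma sum_state_dist: "SP \<pi> \<Longrightarrow> (\<Sum>xs\<in>S. sd \<pi> t xs) = 1"
proof (induction t)
  case 0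
  then show ?case by (simp add: mu_sum)
next
  case (Suc t)
  have "(\<Sum>ys\<in>S. sd \<pi> (Suc t) ys) = (\<Sum>xs\<in>S. sd \<pi> t xs * (\<Sum>ys\<in>S. kernel \<pi> xs ys))"
    unfolding state_dist_Suc by (subst sum.swap) (simp add: sum_distrib_left)
  then show ?case
    using Suc by (simp add: sum_kernel)
qed

lemma state_dist_le_1:
  assumes "SP \<pi>" "xs \<in> S"
  shows "sd \<pi> t xs \<le> 1"
proof -
  have "sd \<pi> t xs \<le> (\<Sum>xs\<in>S. sd \<pi> t xs)"
    using assms by (intro member_le_sum) (auto simp: state_dist_nonneg)
  then show ?thesis
    using assms by (simp add: sum_state_dist)
qed

definition visits :: "('s list \<Rightarrow> 'a list \<Rightarrow> real) \<Rightarrow> 's list \<Rightarrow> real" where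
  "visits \<pi> xs = (\<Sum>t. \<gamma> ^ t * sd \<pi> t xs)"

lemma discounted_state_dist_bounds:
  assumes "SP \<pi>" "xs \<in> S"
  shows "0 \<le> \<gamma> ^ t * sd \<pi> t xs" "\<gamma> ^ t * sd \<pi> t xs \<le> \<gamma> ^ t"
proof -
  have "0 \<le> \<gamma> ^ t"
    using gamma_nonneg by simp
  then show "0 \<le> \<gamma> ^ t * sd \<pi> t xs" "\<gamma> ^ t * sd \<pi> t xs \<le> \<gamma> ^ t"
    using state_dist_nonneg[OF assms] state_dist_le_1[OF assms] by (simp_all add: mult_left_le)
qed

lemma summable_geometric_gamma: "summable (\<lambda>t. \<gamma> ^ t)"
  using gamma_nonneg gamma_less_1 by (simp add: summable_geometric)

lemma summable_discounted_state_dist: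
  assumes "SP \<pi>" "xs \<in> S"
  shows "summable (\<lambda>t. \<gamma> ^ t * sd \<pi> t xs)"
  by (rule summable_comparison_test'[OF summable_geometric_gamma])
    (use discounted_state_dist_bounds[OF assms] in simp)

lemma visits_nonneg: "SP \<pi> \<Longrightarrow> xs \<in> S \<Longrightarrow> 0 \<le> visits \<pi> xs"
  unfolding visits_def
  by (rule suminf_nonneg[OF summable_discounted_state_dist discounted_state_dist_bounds(1)])

lemma visits_le:
  assumes "SP \<pi>" "xs \<in> S"
  shows "visits \<pi> xs \<le> 1 / (1 - \<gamma>)"
proof -
  have "visits \<pi> xs \<le> (\<Sum>t. \<gamma> ^ t)"
    unfolding visits_def
    by (rule suminf_le[OF discounted_state_dist_bounds(2)[OF assms]
          summable_discounted_state_dist[OF assms] summable_geometric_gamma])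
  then show ?thesis
    using gamma_nonneg gamma_less_1 by (simp add: suminf_geometric)
qed

lemma discounted_sum_eq_visits:
  assumes "SP \<pi>"
  shows "summable (\<lambda>t. \<gamma> ^ t * (\<Sum>xs\<in>S. sd \<pi> t xs * g xs))"
    and "(\<Sum>t. \<gamma> ^ t * (\<Sum>xs\<in>S. sd \<pi> t xs * g xs)) = (\<Sum>xs\<in>S. visits \<pi> xs * g xs)"
proof -
  have split: "\<gamma> ^ t * (\<Sum>xs\<in>S. sd \<pi> t xs * g xs) = (\<Sum>xs\<in>S. \<gamma> ^ t * sd \<pi> t xs * g xs)" for t
    by (simp add: sum_distrib_left mult.assoc)
  have summable: "summable (\<lambda>t. \<gamma> ^ t * sd \<pi> t xs * g xs)" if "xs \<in> S" for xs
    by (intro summable_mult2 summable_discounted_state_dist[OF assms that])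
  then show "summable (\<lambda>t. \<gamma> ^ t * (\<Sum>xs\<in>S. sd \<pi> t xs * g xs))"
    unfolding split by (intro summable_sum)
  have "(\<Sum>t. \<gamma> ^ t * (\<Sum>xs\<in>S. sd \<pi> t xs * g xs)) = (\<Sum>xs\<in>S. \<Sum>t. \<gamma> ^ t * sd \<pi> t xs * g xs)"
    unfolding split by (intro suminf_sum summable)
  also have "\<dots> = (\<Sum>xs\<in>S. visits \<pi> xs * g xs)"
    unfolding visits_def
    by (intro sum.cong refl suminf_mult2[symmetric] summable_discounted_state_dist[OF assms])
  finally show "(\<Sum>t. \<gamma> ^ t * (\<Sum>xs\<in>S. sd \<pi> t xs * g xs)) = (\<Sum>xs\<in>S. visits \<pi> xs * g xs)" .
qed

lemma visits_balance:
  assumes "SP \<pi>" "ys \<in> S"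
  shows "visits \<pi> ys = mu ys + \<gamma> * (\<Sum>xs\<in>S. visits \<pi> xs * kernel \<pi> xs ys)"
proof -
  have "visits \<pi> ys = mu ys + (\<Sum>t. \<gamma> ^ Suc t * sd \<pi> (Suc t) ys)"
    unfolding visits_def using suminf_split_head[OF summable_discounted_state_dist[OF assms]] by simp
  also have "(\<Sum>t. \<gamma> ^ Suc t * sd \<pi> (Suc t) ys)
      = \<gamma> * (\<Sum>t. \<gamma> ^ t * (\<Sum>xs\<in>S. sd \<pi> t xs * kernel \<pi> xs ys))"
    unfolding state_dist_Suc
    by (subst suminf_mult[OF discounted_sum_eq_visits(1)[OF assms(1)], symmetric]) (simp add: mult.assoc)
  finally show ?thesis
    by (simp add: discounted_sum_eq_visits(2)[OF assms(1)])
qed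

lemma value_vec_eq_visits:
  assumes "SP \<pi>"
  shows "V \<pi> n = (\<Sum>xs\<in>S. visits \<pi> xs * (\<Sum>as\<in>A. \<pi> xs as * r (xs ! n) (as ! n)))"
  unfolding value_vec_def discounted_sum_eq_visits(2)[OF assms, symmetric]
  by (simp add: sum_distrib_left mult.assoc)

definition joint_reward :: "'s list \<Rightarrow> 'a list \<Rightarrow> real" where
  "joint_reward xs as = (\<Sum>n<N. r (xs ! n) (as ! n))"

definition utilitarian_value :: "('s list \<Rightarrow> 'a list \<Rightarrow> real) \<Rightarrow> real" where
  "utilitarian_value \<pi> = (\<Sum>n<N. V \<pi> n)"

lemma utilitarian_value_eq_visits:
  assumes "SP \<pi>"
  shows "utilitarian_value \<pi> = (\<Sum>xs\<in>S. visits \<pi> xs * (\<Sum>as\<in>A. \<pi> xs as * joint_reward xs as))"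
proof -
  have "utilitarian_value \<pi> = (\<Sum>n<N. \<Sum>xs\<in>S. \<Sum>as\<in>A. visits \<pi> xs * (\<pi> xs as * r (xs ! n) (as ! n)))"
    unfolding utilitarian_value_def value_vec_eq_visits[OF assms] by (simp add: sum_distrib_left)
  also have "\<dots> = (\<Sum>xs\<in>S. \<Sum>as\<in>A. \<Sum>n<N. visits \<pi> xs * (\<pi> xs as * r (xs ! n) (as ! n)))"
    by (subst sum.swap) (rule sum.cong[OF refl sum.swap])
  also have "\<dots> = (\<Sum>xs\<in>S. visits \<pi> xs * (\<Sum>as\<in>A. \<pi> xs as * joint_reward xs as))"
    by (simp add: joint_reward_def sum_distrib_left)
  finally show ?thesis .
qed

section \<open>Occupation measures\<close>

definition balanced :: "('s list \<times> 'a list \<Rightarrow> real) \<Rightarrow> bool" where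
  "balanced x \<longleftrightarrow> (\<forall>ys\<in>S. (\<Sum>as\<in>A. x (ys, as)) = mu ys + \<gamma> * (\<Sum>xs\<in>S. \<Sum>as\<in>A. x (xs, as) * T xs as ys))"

text \<open>The bounds only serve to make the set of occupation measures compact; every occupation
  measure satisfies them by \<open>visits_le\<close>.\<close>
definition occupancy_bounds :: "'s list \<times> 'a list \<Rightarrow> real set" where
  "occupancy_bounds i = (if i \<in> S \<times> A then {0..1 / (1 - \<gamma>)} else {0})"

definition occupancies :: "('s list \<times> 'a list \<Rightarrow> real) set" where
  "occupancies = {x. (\<forall>i. x i \<in> occupancy_bounds i) \<and> balanced x}"

definition occupancy :: "('s list \<Rightarrow> 'a list \<Rightarrow> real) \<Rightarrow> 's list \<times> 'a list \<Rightarrow> real" where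
  "occupancy \<pi> = (\<lambda>(xs, as). if (xs, as) \<in> S \<times> A then visits \<pi> xs * \<pi> xs as else 0)"

definition linear_reward :: "('s list \<times> 'a list \<Rightarrow> real) \<Rightarrow> real" where
  "linear_reward x = (\<Sum>xs\<in>S. \<Sum>as\<in>A. x (xs, as) * joint_reward xs as)"

lemma occupancies_bounds: "x \<in> occupancies \<Longrightarrow> x i \<in> occupancy_bounds i"
  unfolding occupancies_def by blast

lemma occupancies_nonneg: "x \<in> occupancies \<Longrightarrow> 0 \<le> x i"
  using occupancies_bounds[of x i] by (auto simp: occupancy_bounds_def split: if_splits)

lemma occupancies_outside: "x \<in> occupancies \<Longrightarrow> i \<notin> S \<times> A \<Longrightarrow> x i = 0"
  using occupancies_bounds[of x i] by (simp add: occupancy_bounds_def)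

lemma occupancies_balanced: "x \<in> occupancies \<Longrightarrow> balanced x"
  by (simp add: occupancies_def)

lemma occupancy_mem_occupancies:
  assumes "SP \<pi>"
  shows "occupancy \<pi> \<in> occupancies"
proof -
  have "occupancy \<pi> (xs, as) \<in> occupancy_bounds (xs, as)" for xs as
  proof (cases "xs \<in> S \<and> as \<in> A")
    case True
    then have "visits \<pi> xs * \<pi> xs as \<le> 1 / (1 - \<gamma>)"
      using assms visits_le visits_nonneg policy_le_1
      by (meson mult_left_le order_trans)
    then show ?thesis
      using True assms by (simp add: occupancy_def occupancy_bounds_def visits_nonneg policy_nonneg)
  qed (auto simp: occupancy_def occupancy_bounds_def)
  moreover have "balanced (occupancy \<pi>)"
    unfolding balanced_def
  proof
    fix ys assume "ys \<in> S"
    have "(\<Sum>as\<in>A. occupancy \<pi> (ys, as)) = visits \<pi> ys"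
      using \<open>ys \<in> S\<close> assms by (simp add: occupancy_def sum_distrib_left[symmetric] sum_policy)
    also have "\<dots> = mu ys + \<gamma> * (\<Sum>xs\<in>S. visits \<pi> xs * kernel \<pi> xs ys)"
      by (rule visits_balance[OF assms \<open>ys \<in> S\<close>])
    also have "(\<Sum>xs\<in>S. visits \<pi> xs * kernel \<pi> xs ys)
        = (\<Sum>xs\<in>S. \<Sum>as\<in>A. occupancy \<pi> (xs, as) * T xs as ys)"
      by (simp add: occupancy_def kernel_def sum_distrib_left mult.assoc)
    finally show "(\<Sum>as\<in>A. occupancy \<pi> (ys, as))
        = mu ys + \<gamma> * (\<Sum>xs\<in>S. \<Sum>as\<in>A. occupancy \<pi> (xs, as) * T xs as ys)" .
  qed
  ultimately show ?thesis
    unfolding occupancies_def by auto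
qed

lemma linear_reward_occupancy: "SP \<pi> \<Longrightarrow> linear_reward (occupancy \<pi>) = utilitarian_value \<pi>"
  by (simp add: linear_reward_def occupancy_def utilitarian_value_eq_visits sum_distrib_left mult.assoc)

lemma compact_occupancies: "compact occupancies"
proof -
  have coordinate: "continuous_on UNIV (\<lambda>x :: 's list \<times> 'a list \<Rightarrow> real. x i)" for i
    by (rule continuous_on_product_coordinates)
  have "compact (Pi\<^sub>E UNIV occupancy_bounds)"
    using compactin_PiE[of "\<lambda>_. euclidean" UNIV occupancy_bounds]
    by (simp add: occupancy_bounds_def euclidean_product_topology compactin_euclidean_iff)
  moreover have "{x. balanced x}
      = (\<Inter>ys\<in>S. {x. (\<Sum>as\<in>A. x (ys, as)) = mu ys + \<gamma> * (\<Sum>xs\<in>S. \<Sum>as\<in>A. x (xs, as) * T xs as ys)})"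
    unfolding balanced_def by blast
  then have "closed {x. balanced x}"
    by (simp only:) (intro closed_INT ballI closed_Collect_eq continuous_intros coordinate)
  moreover have "occupancies = Pi\<^sub>E UNIV occupancy_bounds \<inter> {x. balanced x}"
    unfolding occupancies_def by (auto simp: PiE_iff)
  ultimately show ?thesis
    by (simp add: compact_Int_closed)
qed

lemma continuous_on_linear_reward: "continuous_on occupancies linear_reward"
  unfolding linear_reward_def
  by (intro continuous_intros continuous_on_product_coordinates[THEN continuous_on_subset]) simp

definition marginal :: "('s list \<times> 'a list \<Rightarrow> real) \<Rightarrow> 's list \<Rightarrow> real" where
  "marginal x xs = (\<Sum>as\<in>A. x (xs, as))"

text \<open>Where the state marginal vanishes the choice of actions is irrelevant; we act uniformly.\<close>
definition policy_of :: "('s list \<times> 'a list \<Rightarrow> real) \<Rightarrow> 's list \<Rightarrow> 'a list \<Rightarrow> real" where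
  "policy_of x xs as =
     (if as \<notin> A then 0 else if marginal x xs = 0 then 1 / real (card A) else x (xs, as) / marginal x xs)"

lemma marginal_nonneg: "x \<in> occupancies \<Longrightarrow> 0 \<le> marginal x xs"
  unfolding marginal_def by (simp add: sum_nonneg occupancies_nonneg)

lemma occupancy_eq_marginal_policy_of:
  assumes "x \<in> occupancies" "as \<in> A"
  shows "x (xs, as) = marginal x xs * policy_of x xs as"
proof (cases "marginal x xs = 0")
  case True
  then have "x (xs, as) = 0"
    using assms sum_nonneg_eq_0_iff[of A "\<lambda>as. x (xs, as)"]
    by (simp add: marginal_def occupancies_nonneg)
  then show ?thesis
    using True by simp
qed (simp add: policy_of_def assms)

lemma stationary_policy_of:
  assumes "x \<in> occupancies" "A \<noteq> {}"
  shows "SP (policy_of x)"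
  unfolding stationary_policy_def
proof (intro ballI conjI allI impI)
  fix xs as
  show "0 \<le> policy_of x xs as"
    using assms(1) by (simp add: policy_of_def marginal_nonneg occupancies_nonneg)
  show "as \<notin> A \<Longrightarrow> policy_of x xs as = 0"
    by (simp add: policy_of_def)
  show "(\<Sum>as\<in>A. policy_of x xs as) = 1"
  proof (cases "marginal x xs = 0")
    case True
    then show ?thesis
      using assms(2) by (simp add: policy_of_def)
  next
    case False
    then have "(\<Sum>as\<in>A. policy_of x xs as) = marginal x xs / marginal x xs"
      by (simp add: policy_of_def sum_divide_distrib[symmetric] marginal_def[of x xs, symmetric])
    then show ?thesis
      using False by simp
  qed
qed

lemma visits_policy_of:
  assumes "x \<in> occupancies" "A \<noteq> {}" "ys \<in> S"
  shows "visits (policy_of x) ys = marginal x ys"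
proof -
  let ?\<pi> = "policy_of x"
  have SP: "SP ?\<pi>"
    using stationary_policy_of[OF assms(1,2)] .
  have marginal_balance: "marginal x ys = mu ys + \<gamma> * (\<Sum>xs\<in>S. marginal x xs * kernel ?\<pi> xs ys)"
    if "ys \<in> S" for ys
  proof -
    have "marginal x ys = mu ys + \<gamma> * (\<Sum>xs\<in>S. \<Sum>as\<in>A. x (xs, as) * T xs as ys)"
      using occupancies_balanced[OF assms(1)] that by (simp add: balanced_def marginal_def)
    also have "(\<Sum>xs\<in>S. \<Sum>as\<in>A. x (xs, as) * T xs as ys) = (\<Sum>xs\<in>S. marginal x xs * kernel ?\<pi> xs ys)"
      unfolding kernel_def sum_distrib_left
      by (intro sum.cong refl) (simp add: occupancy_eq_marginal_policy_of[OF assms(1)])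
    finally show ?thesis .
  qed
  have "marginal x ys - visits ?\<pi> ys = 0"
  proof (rule discounted_fixpoint_eq_0[OF finite_states _ _ gamma_nonneg gamma_less_1 _ assms(3)])
    show "0 \<le> kernel ?\<pi> xs ys" "(\<Sum>ys\<in>S. kernel ?\<pi> xs ys) = 1" if "xs \<in> S" for xs ys
      using SP that by (simp_all add: kernel_nonneg sum_kernel)
    show "marginal x ys - visits ?\<pi> ys
        = \<gamma> * (\<Sum>xs\<in>S. (marginal x xs - visits ?\<pi> xs) * kernel ?\<pi> xs ys)" if "ys \<in> S" for ys
      using marginal_balance[OF that] visits_balance[OF SP that]
      by (simp add: left_diff_distrib right_diff_distrib sum_subtractf)
  qed
  then show ?thesis
    by simp
qed

lemma utilitarian_value_policy_of:
  assumes "x \<in> occupancies" "A \<noteq> {}"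
  shows "utilitarian_value (policy_of x) = linear_reward x"
  unfolding utilitarian_value_eq_visits[OF stationary_policy_of[OF assms]] linear_reward_def
    sum_distrib_left
  using assms by (intro sum.cong refl) (simp add: visits_policy_of occupancy_eq_marginal_policy_of)

section \<open>Symmetrization\<close>

abbreviation "Perms \<equiv> {\<sigma>. \<sigma> permutes {..<N}}"

lemma perm_list_mem_states: "\<sigma> permutes {..<N} \<Longrightarrow> perm_list \<sigma> xs \<in> S \<longleftrightarrow> xs \<in> S"
  by (simp add: joint_states_def)

lemma perm_list_mem_actions:
  assumes "\<sigma> permutes {..<N}"
  shows "perm_list \<sigma> as \<in> A \<longleftrightarrow> as \<in> A"
proof (cases "length as = N")
  case True
  have "(\<Sum>n<N. d k (perm_list \<sigma> as ! n)) = (\<Sum>n<N. d k (as ! n))" for k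
    using True sum.permute[OF assms, of "\<lambda>n. d k (as ! n)"] by simp
  then show ?thesis
    using True by (simp add: joint_actions_def)
qed (simp add: joint_actions_def)

lemma sum_states_perm: "\<sigma> permutes {..<N} \<Longrightarrow> (\<Sum>xs\<in>S. f (perm_list \<sigma> xs)) = (\<Sum>xs\<in>S. f xs)"
  by (intro sum.reindex_bij_betw bij_betw_perm_list) (auto simp: length_state perm_list_mem_states)

lemma sum_actions_perm: "\<sigma> permutes {..<N} \<Longrightarrow> (\<Sum>as\<in>A. f (perm_list \<sigma> as)) = (\<Sum>as\<in>A. f as)"
  by (intro sum.reindex_bij_betw bij_betw_perm_list) (auto simp: length_action perm_list_mem_actions)

lemma sum_states_actions_perm:
  assumes "\<sigma> permutes {..<N}"
  shows "(\<Sum>xs\<in>S. \<Sum>as\<in>A. f (perm_list \<sigma> xs) (perm_list \<sigma> as)) = (\<Sum>xs\<in>S. \<Sum>as\<in>A. f xs as)"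
proof -
  have "(\<Sum>xs\<in>S. \<Sum>as\<in>A. f (perm_list \<sigma> xs) (perm_list \<sigma> as)) = (\<Sum>xs\<in>S. \<Sum>as\<in>A. f (perm_list \<sigma> xs) as)"
    by (intro sum.cong refl sum_actions_perm[OF assms])
  also have "\<dots> = (\<Sum>xs\<in>S. \<Sum>as\<in>A. f xs as)"
    by (rule sum_states_perm[OF assms, of "\<lambda>xs. \<Sum>as\<in>A. f xs as"])
  finally show ?thesis .
qed

lemma trans_perm:
  assumes "\<sigma> permutes {..<N}" "length xs = N" "length as = N" "length ys = N"
  shows "T (perm_list \<sigma> xs) (perm_list \<sigma> as) (perm_list \<sigma> ys) = T xs as ys"
  unfolding joint_trans_def
  using assms prod.permute[OF assms(1), of "\<lambda>n. p (xs ! n) (as ! n) (ys ! n)"] by simp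

lemma joint_reward_perm:
  assumes "\<sigma> permutes {..<N}" "length xs = N" "length as = N"
  shows "joint_reward (perm_list \<sigma> xs) (perm_list \<sigma> as) = joint_reward xs as"
  unfolding joint_reward_def
  using assms sum.permute[OF assms(1), of "\<lambda>n. r (xs ! n) (as ! n)"] by simp

definition permute_occupancy :: "(nat \<Rightarrow> nat) \<Rightarrow> ('s list \<times> 'a list \<Rightarrow> real) \<Rightarrow> 's list \<times> 'a list \<Rightarrow> real" where
  "permute_occupancy \<sigma> x = (\<lambda>(xs, as). x (perm_list \<sigma> xs, perm_list \<sigma> as))"

lemma permute_occupancy_mem_occupancies:
  assumes "x \<in> occupancies" "\<sigma> permutes {..<N}"
  shows "permute_occupancy \<sigma> x \<in> occupancies"
proof -
  have "permute_occupancy \<sigma> x (xs, as) \<in> occupancy_bounds (xs, as)" for xs as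
    using occupancies_bounds[OF assms(1), of "(perm_list \<sigma> xs, perm_list \<sigma> as)"] assms(2)
    by (simp add: permute_occupancy_def occupancy_bounds_def perm_list_mem_states perm_list_mem_actions)
  moreover have "balanced (permute_occupancy \<sigma> x)"
    unfolding balanced_def
  proof
    fix ys assume "ys \<in> S"
    then have ys: "perm_list \<sigma> ys \<in> S" "length ys = N"
      using assms(2) by (simp_all add: perm_list_mem_states length_state)
    have "(\<Sum>as\<in>A. permute_occupancy \<sigma> x (ys, as)) = (\<Sum>as\<in>A. x (perm_list \<sigma> ys, as))"
      unfolding permute_occupancy_def
      by (simp add: sum_actions_perm[OF assms(2), of "\<lambda>as. x (perm_list \<sigma> ys, as)"])
    also have "\<dots> = mu (perm_list \<sigma> ys)
        + \<gamma> * (\<Sum>xs\<in>S. \<Sum>as\<in>A. x (xs, as) * T xs as (perm_list \<sigma> ys))"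
      using occupancies_balanced[OF assms(1)] ys(1) by (simp add: balanced_def)
    also have "\<dots> = mu ys + \<gamma> * (\<Sum>xs\<in>S. \<Sum>as\<in>A. x (perm_list \<sigma> xs, perm_list \<sigma> as)
        * T (perm_list \<sigma> xs) (perm_list \<sigma> as) (perm_list \<sigma> ys))"
      using mu_sym[OF assms(2) \<open>ys \<in> S\<close>]
        sum_states_actions_perm[OF assms(2), of "\<lambda>xs as. x (xs, as) * T xs as (perm_list \<sigma> ys)"]
      by simp
    also have "\<dots> = mu ys + \<gamma> * (\<Sum>xs\<in>S. \<Sum>as\<in>A. permute_occupancy \<sigma> x (xs, as) * T xs as ys)"
      using assms(2) \<open>ys \<in> S\<close> ys(2)
      by (simp add: permute_occupancy_def trans_perm length_state length_action)
    finally show "(\<Sum>as\<in>A. permute_occupancy \<sigma> x (ys, as))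
        = mu ys + \<gamma> * (\<Sum>xs\<in>S. \<Sum>as\<in>A. permute_occupancy \<sigma> x (xs, as) * T xs as ys)" .
  qed
  ultimately show ?thesis
    by (simp add: occupancies_def)
qed

lemma linear_reward_permute_occupancy:
  assumes "\<sigma> permutes {..<N}"
  shows "linear_reward (permute_occupancy \<sigma> x) = linear_reward x"
proof -
  have "linear_reward (permute_occupancy \<sigma> x)
      = (\<Sum>xs\<in>S. \<Sum>as\<in>A. x (perm_list \<sigma> xs, perm_list \<sigma> as)
           * joint_reward (perm_list \<sigma> xs) (perm_list \<sigma> as))"
    unfolding linear_reward_def permute_occupancy_def
    using assms by (simp add: joint_reward_perm length_state length_action)
  also have "\<dots> = linear_reward x"
    unfolding linear_reward_def by (rule sum_states_actions_perm[OF assms])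
  finally show ?thesis .
qed

lemma sum_swap_outer:
  "(\<Sum>xs\<in>X. \<Sum>as\<in>Y. \<Sum>i\<in>I. f i xs as) = (\<Sum>i\<in>I. \<Sum>xs\<in>X. \<Sum>as\<in>Y. f i xs as)"
  by (rule trans[OF sum.cong[OF refl sum.swap] sum.swap])

lemma average_mem_occupancies:
  assumes "finite I" "I \<noteq> {}" "\<And>i. i \<in> I \<Longrightarrow> x i \<in> occupancies"
  shows "(\<lambda>j. (\<Sum>i\<in>I. x i j) / real (card I)) \<in> occupancies"
proof -
  have card: "0 < real (card I)"
    using assms(1,2) by (simp add: card_gt_0_iff)
  have "(\<Sum>i\<in>I. x i j) / real (card I) \<in> occupancy_bounds j" for j
  proof (cases "j \<in> S \<times> A")
    case True
    then have bounds: "0 \<le> x i j" "x i j \<le> 1 / (1 - \<gamma>)" if "i \<in> I" for i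
      using occupancies_bounds[OF assms(3)[OF that], of j] by (simp_all add: occupancy_bounds_def)
    have "0 \<le> (\<Sum>i\<in>I. x i j)"
      using bounds(1) by (simp add: sum_nonneg)
    moreover have "(\<Sum>i\<in>I. x i j) \<le> real (card I) * (1 / (1 - \<gamma>))"
      by (rule sum_bounded_above[OF bounds(2)])
    ultimately show ?thesis
      using True card by (simp add: occupancy_bounds_def field_simps)
  qed (simp add: occupancy_bounds_def occupancies_outside assms(3))
  moreover have "balanced (\<lambda>j. (\<Sum>i\<in>I. x i j) / real (card I))"
    unfolding balanced_def
  proof
    fix ys assume "ys \<in> S"
    have "(\<Sum>as\<in>A. (\<Sum>i\<in>I. x i (ys, as)) / real (card I))
        = (\<Sum>i\<in>I. \<Sum>as\<in>A. x i (ys, as)) / real (card I)"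
      by (simp only: sum_divide_distrib[symmetric] sum.swap[of _ A I])
    also have "\<dots> = (\<Sum>i\<in>I. mu ys + \<gamma> * (\<Sum>xs\<in>S. \<Sum>as\<in>A. x i (xs, as) * T xs as ys)) / real (card I)"
      using occupancies_balanced[OF assms(3)] \<open>ys \<in> S\<close> by (simp add: balanced_def)
    also have "\<dots> = mu ys + \<gamma> * ((\<Sum>i\<in>I. \<Sum>xs\<in>S. \<Sum>as\<in>A. x i (xs, as) * T xs as ys) / real (card I))"
      using card by (simp add: sum.distrib sum_distrib_left[symmetric] field_simps)
    also have "(\<Sum>i\<in>I. \<Sum>xs\<in>S. \<Sum>as\<in>A. x i (xs, as) * T xs as ys) / real (card I)
        = (\<Sum>xs\<in>S. \<Sum>as\<in>A. (\<Sum>i\<in>I. x i (xs, as)) / real (card I) * T xs as ys)"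
      by (simp add: sum_swap_outer[where X=S and Y=A and I=I] sum_divide_distrib sum_distrib_right)
    finally show "(\<Sum>as\<in>A. (\<Sum>i\<in>I. x i (ys, as)) / real (card I))
        = mu ys + \<gamma> * (\<Sum>xs\<in>S. \<Sum>as\<in>A. (\<Sum>i\<in>I. x i (xs, as)) / real (card I) * T xs as ys)" .
  qed
  ultimately show ?thesis
    by (simp add: occupancies_def)
qed

lemma linear_reward_average:
  "linear_reward (\<lambda>j. (\<Sum>i\<in>I. x i j) / real (card I)) = (\<Sum>i\<in>I. linear_reward (x i)) / real (card I)"
  unfolding linear_reward_def
  by (simp add: sum_swap_outer[where X=S and Y=A and I=I] sum_divide_distrib sum_distrib_right)

definition symmetrize :: "('s list \<times> 'a list \<Rightarrow> real) \<Rightarrow> 's list \<times> 'a list \<Rightarrow> real" where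
  "symmetrize x = (\<lambda>j. (\<Sum>\<sigma>\<in>Perms. permute_occupancy \<sigma> x j) / real (card Perms))"

lemma symmetrize_mem_occupancies: "x \<in> occupancies \<Longrightarrow> symmetrize x \<in> occupancies"
  unfolding symmetrize_def
  by (intro average_mem_occupancies permute_occupancy_mem_occupancies)
    (auto simp: finite_permutations intro: permutes_id)

lemma linear_reward_symmetrize: "linear_reward (symmetrize x) = linear_reward x"
proof -
  have "card Perms \<noteq> 0"
    by (simp add: card_permutations)
  then show ?thesis
    unfolding symmetrize_def linear_reward_average by (simp add: linear_reward_permute_occupancy)
qed

lemma symmetrize_perm:
  assumes "\<tau> permutes {..<N}" "length xs = N" "length as = N"
  shows "symmetrize x (perm_list \<tau> xs, perm_list \<tau> as) = symmetrize x (xs, as)"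
proof -
  have "permute_occupancy \<sigma> x (perm_list \<tau> xs, perm_list \<tau> as) = permute_occupancy (\<tau> \<circ> \<sigma>) x (xs, as)"
    if "\<sigma> permutes {..<N}" for \<sigma>
    using that assms(2,3) by (simp add: permute_occupancy_def perm_list_perm_list)
  then show ?thesis
    unfolding symmetrize_def
    using setum_permutations_compose_left[OF assms(1), of "\<lambda>\<sigma>. permute_occupancy \<sigma> x (xs, as)"]
    by (simp add: comp_def)
qed

lemma perm_invariant_policy_of:
  assumes x_perm: "\<And>\<tau> xs as. \<tau> permutes {..<N} \<Longrightarrow> length xs = N \<Longrightarrow> length as = N \<Longrightarrow>
      x (perm_list \<tau> xs, perm_list \<tau> as) = x (xs, as)"
  shows "perm_invariant N (policy_of x)"
  unfolding perm_invariant_def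
proof (intro allI impI)
  fix \<tau> and xs :: "'s list" and as :: "'a list"
  assume "\<tau> permutes {..<N}" "length xs = N" "length as = N"
  moreover have "marginal x (perm_list \<tau> xs) = marginal x xs"
  proof -
    have "marginal x (perm_list \<tau> xs) = (\<Sum>as\<in>A. x (perm_list \<tau> xs, perm_list \<tau> as))"
      unfolding marginal_def by (rule sum_actions_perm[OF \<open>\<tau> permutes {..<N}\<close>, symmetric])
    then show ?thesis
      using \<open>\<tau> permutes {..<N}\<close> \<open>length xs = N\<close> by (simp add: marginal_def x_perm length_action)
  qed
  ultimately show "policy_of x xs as = policy_of x (perm_list \<tau> xs) (perm_list \<tau> as)"
    by (simp add: policy_of_def perm_list_mem_actions x_perm)
qed

lemma exists_perm_invariant_optimal:
  assumes "A \<noteq> {}"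
  shows "\<exists>\<pi>. SP \<pi> \<and> perm_invariant N \<pi> \<and> (\<forall>\<pi>'. SP \<pi>' \<longrightarrow> utilitarian_value \<pi>' \<le> utilitarian_value \<pi>)"
proof -
  have "SP (\<lambda>_ as. if as \<in> A then 1 / real (card A) else 0)"
    using assms by (simp add: stationary_policy_def)
  then have "occupancies \<noteq> {}"
    using occupancy_mem_occupancies by blast
  then obtain x where x: "x \<in> occupancies" "\<And>y. y \<in> occupancies \<Longrightarrow> linear_reward y \<le> linear_reward x"
    using continuous_attains_sup[OF compact_occupancies _ continuous_on_linear_reward] by blast
  let ?\<pi> = "policy_of (symmetrize x)"
  have "utilitarian_value \<pi>' \<le> utilitarian_value ?\<pi>" if "SP \<pi>'" for \<pi>'
  proof -
    have "utilitarian_value \<pi>' = linear_reward (occupancy \<pi>')"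
      using that by (simp add: linear_reward_occupancy)
    also have "\<dots> \<le> linear_reward x"
      using that by (intro x(2) occupancy_mem_occupancies)
    also have "\<dots> = utilitarian_value ?\<pi>"
      using x(1) assms
      by (simp add: utilitarian_value_policy_of symmetrize_mem_occupancies linear_reward_symmetrize)
    finally show ?thesis .
  qed
  moreover have "SP ?\<pi>"
    using x(1) assms by (simp add: stationary_policy_of symmetrize_mem_occupancies)
  moreover have "perm_invariant N ?\<pi>"
    by (intro perm_invariant_policy_of symmetrize_perm)
  ultimately show ?thesis
    by blast
qed

lemma perm_invariantD:
  assumes "perm_invariant N \<pi>" "\<tau> permutes {..<N}" "xs \<in> S" "as \<in> A"
  shows "\<pi> (perm_list \<tau> xs) (perm_list \<tau> as) = \<pi> xs as"
  using assms length_state[OF assms(3)] length_action[OF assms(4)]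
  unfolding perm_invariant_def by metis

lemma kernel_perm:
  assumes "perm_invariant N \<pi>" "\<tau> permutes {..<N}" "xs \<in> S" "ys \<in> S"
  shows "kernel \<pi> (perm_list \<tau> xs) (perm_list \<tau> ys) = kernel \<pi> xs ys"
proof -
  have "kernel \<pi> (perm_list \<tau> xs) (perm_list \<tau> ys)
      = (\<Sum>as\<in>A. \<pi> (perm_list \<tau> xs) (perm_list \<tau> as) * T (perm_list \<tau> xs) (perm_list \<tau> as) (perm_list \<tau> ys))"
    unfolding kernel_def by (rule sum_actions_perm[OF assms(2), symmetric])
  also have "\<dots> = kernel \<pi> xs ys"
    unfolding kernel_def using assms
    by (intro sum.cong refl) (simp add: perm_invariantD trans_perm length_state length_action)
  finally show ?thesis .
qed

lemma state_dist_perm: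
  assumes "perm_invariant N \<pi>" "\<tau> permutes {..<N}" "ys \<in> S"
  shows "sd \<pi> t (perm_list \<tau> ys) = sd \<pi> t ys"
  using assms(3)
proof (induction t arbitrary: ys)
  case 0
  then show ?case
    using mu_sym[OF assms(2) 0] by simp
next
  case (Suc t)
  have "sd \<pi> (Suc t) (perm_list \<tau> ys) = (\<Sum>xs\<in>S. sd \<pi> t (perm_list \<tau> xs) * kernel \<pi> (perm_list \<tau> xs) (perm_list \<tau> ys))"
    unfolding state_dist_Suc by (rule sum_states_perm[OF assms(2), symmetric])
  also have "\<dots> = sd \<pi> (Suc t) ys"
    unfolding state_dist_Suc using Suc assms by (simp add: kernel_perm)
  finally show ?case .
qed

lemma visits_perm:
  "perm_invariant N \<pi> \<Longrightarrow> \<tau> permutes {..<N} \<Longrightarrow> xs \<in> S \<Longrightarrow> visits \<pi> (perm_list \<tau> xs) = visits \<pi> xs"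
  by (simp add: visits_def state_dist_perm)

text \<open>Relabelling the sub-MDPs by the transposition of \<open>0\<close> and \<open>n\<close> turns the reward of sub-MDP \<open>n\<close>
  into that of sub-MDP \<open>0\<close> and leaves visits and policy unchanged.\<close>
lemma value_vec_perm_invariant:
  assumes "SP \<pi>" "perm_invariant N \<pi>" "n < N"
  shows "V \<pi> n = V \<pi> 0"
proof -
  define \<tau> where "\<tau> = Transposition.transpose 0 n"
  have \<tau>: "\<tau> permutes {..<N}"
    unfolding \<tau>_def using assms(3) by (intro permutes_swap_id) auto
  have nth_0: "perm_list \<tau> v ! 0 = v ! n" if "length v = N" for v :: "'x list"
    using that assms(3) by (simp add: \<tau>_def)
  have "V \<pi> 0 = (\<Sum>xs\<in>S. \<Sum>as\<in>A. visits \<pi> xs * \<pi> xs as * r (xs ! 0) (as ! 0))"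
    by (simp add: value_vec_eq_visits[OF assms(1)] sum_distrib_left mult.assoc)
  also have "\<dots> = (\<Sum>xs\<in>S. \<Sum>as\<in>A. visits \<pi> (perm_list \<tau> xs) * \<pi> (perm_list \<tau> xs) (perm_list \<tau> as)
      * r (perm_list \<tau> xs ! 0) (perm_list \<tau> as ! 0))"
    by (rule sum_states_actions_perm[OF \<tau>, symmetric])
  also have "\<dots> = (\<Sum>xs\<in>S. \<Sum>as\<in>A. visits \<pi> xs * \<pi> xs as * r (xs ! n) (as ! n))"
    using assms(2) \<tau>
    by (intro sum.cong refl) (simp add: visits_perm perm_invariantD nth_0 length_state length_action)
  also have "\<dots> = V \<pi> n"
    by (simp add: value_vec_eq_visits[OF assms(1)] sum_distrib_left mult.assoc)
  finally show ?thesis ..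
qed

lemma utilitarian_value_perm_invariant:
  assumes "SP \<pi>" "perm_invariant N \<pi>"
  shows "utilitarian_value \<pi> = real N * V \<pi> 0"
proof -
  have "utilitarian_value \<pi> = (\<Sum>n<N. V \<pi> 0)"
    unfolding utilitarian_value_def
    by (intro sum.cong refl value_vec_perm_invariant[OF assms]) simp
  then show ?thesis
    by simp
qed

lemma GGF_le_perm_invariant_optimal:
  assumes "SP \<pi>s" "perm_invariant N \<pi>s" "utilitarian_value \<pi> \<le> utilitarian_value \<pi>s"
    and w: "(\<Sum>n<N. w n) = 1" and "0 < N"
  shows "GGF N w (V \<pi>) \<le> GGF N w (V \<pi>s)"
proof -
  have "GGF N w (V \<pi>) \<le> utilitarian_value \<pi> / real N"
    using GGF_le_mean[where N=N and w=w and v="V \<pi>"] assms(4,5) by (simp add: utilitarian_value_def)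
  also have "\<dots> \<le> utilitarian_value \<pi>s / real N"
    using assms(3) by (simp add: divide_right_mono)
  also have "\<dots> = V \<pi>s 0"
    using utilitarian_value_perm_invariant[OF assms(1,2)] assms(5) by simp
  also have "\<dots> = GGF N w (V \<pi>s)"
    by (rule GGF_const[OF value_vec_perm_invariant[OF assms(1,2)] w, symmetric])
  finally show ?thesis .
qed

end

theorem theorem3p2:
  fixes N K :: nat
    and p :: "'s::finite \<Rightarrow> 'a::finite \<Rightarrow> 's \<Rightarrow> real"
    and r :: "'s \<Rightarrow> 'a \<Rightarrow> real"
    and d :: "nat \<Rightarrow> 'a \<Rightarrow> real" and b :: "nat \<Rightarrow> real"
    and \<gamma> :: real and mu :: "'s list \<Rightarrow> real"
  assumes N_pos: "1 \<le> N"
    and p_nonneg: "\<And>s a s'. 0 \<le> p s a s'"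
    and p_sum: "\<And>s a. (\<Sum>s'\<in>UNIV. p s a s') = 1"
    and d_nonneg: "\<And>k a. k < K \<Longrightarrow> 0 \<le> d k a"
    and b_nonneg: "\<And>k. k < K \<Longrightarrow> 0 \<le> b k"
    and idle: "\<exists>a0. \<forall>k<K. d k a0 = 0"
    and gamma: "0 \<le> \<gamma>" "\<gamma> < 1"
    and mu_nonneg: "\<And>xs. xs \<in> joint_states N \<Longrightarrow> 0 \<le> mu xs"
    and mu_sum: "(\<Sum>xs \<in> joint_states N. mu xs) = 1"
    and mu_sym: "\<And>\<sigma> xs. \<sigma> permutes {..<N} \<Longrightarrow> xs \<in> joint_states N \<Longrightarrow> mu xs = mu (perm_list \<sigma> xs)"
  shows "opt_util_PI N K d b p r \<gamma> mu \<noteq> {} \<and>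
    (\<forall>\<pi>s \<in> opt_util_PI N K d b p r \<gamma> mu. \<forall>w. gini_weights N w \<longrightarrow>
       (\<forall>\<pi>. stationary_policy N K d b \<pi> \<longrightarrow>
          GGF N w (value_vec N K d b p r \<gamma> mu \<pi>) \<le> GGF N w (value_vec N K d b p r \<gamma> mu \<pi>s)))"
proof -
  interpret symmetric_wcmdp N K p r d b \<gamma> mu
    using p_nonneg p_sum gamma mu_nonneg mu_sum mu_sym by unfold_locales
  have uniform: "GGF N (\<lambda>_. 1 / real N) (V \<pi>) = utilitarian_value \<pi> / real N" for \<pi>
    by (simp add: GGF_uniform utilitarian_value_def)
  obtain a0 where "\<forall>k<K. d k a0 = 0"
    using idle by blast
  then have "replicate N a0 \<in> A"
    using b_nonneg by (simp add: joint_actions_def)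
  then obtain \<pi>0 where "SP \<pi>0" "perm_invariant N \<pi>0" "\<And>\<pi>. SP \<pi> \<Longrightarrow> utilitarian_value \<pi> \<le> utilitarian_value \<pi>0"
    using exists_perm_invariant_optimal by blast
  then have "\<pi>0 \<in> opt_util_PI N K d b p r \<gamma> mu"
    by (simp add: opt_util_PI_def uniform divide_right_mono)
  moreover have "GGF N w (V \<pi>) \<le> GGF N w (V \<pi>s)"
    if "\<pi>s \<in> opt_util_PI N K d b p r \<gamma> mu" "gini_weights N w" "SP \<pi>" for \<pi>s w \<pi>
    using that N_pos GGF_le_perm_invariant_optimal
    by (auto simp: opt_util_PI_def uniform gini_weights_def divide_le_cancel)
  ultimately show ?thesis
    by blast
qed

end
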